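(* Let $s=(s_1,\ldots,s_n)$ be a sequence of positive integers and let $F$ be a nonempty face of the $s$-lecture hall simplex $P_n^s$, of dimension $m$. Then $\ell^\ast(F;z)=d_m^\mu(z)$ for some sequence $\mu=(\mu_1,\ldots,\mu_m)$ of positive integers.
   Context: For a sequence $t=(t_1,\ldots,t_m)$ of positive integers, $P_m^t=\{x\in\mathbb{R}^m:0\le x_1/t_1\le\cdots\le x_m/t_m\le1\}$ (a point when $m=0$), and $d_m^t(z)=\ell^\ast(P_m^t;z)$. For a lattice $d$-simplex $\Delta=\mathrm{conv}(v^{(0)},\ldots,v^{(d)})\subset\mathbb{R}^N$, $\ell^\ast(\Delta;z)=\sum_{x\in\Pi^\circ_\Delta\cap\mathbb{Z}^{N+1}}z^{x_{N+1}}$, where $\Pi^\circ_\Delta=\{\sum_i\lambda_i(v^{(i)},1):0<\lambda_i<1\}$. *)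

theory Defs
  imports "HOL-Analysis.Analysis" "HOL-Computational_Algebra.Polynomial"
begin

definition lecture_hall :: "('n::{finite,linorder} \<Rightarrow> nat) \<Rightarrow> (real^('n::{finite,linorder})) set" where
  "lecture_hall s = {x. (\<forall>i. 0 \<le> x$i / real (s i) \<and> x$i / real (s i) \<le> 1) \<and>
                        (\<forall>i j. i \<le> j \<longrightarrow> x$i / real (s i) \<le> x$j / real (s j))}"

text \<open>P_m^t in R^m, realised inside nat => real: coordinates 0..m-1 carry
  x_1..x_m, all other coordinates are 0.  For m = 0 this is a single point.\<close>
definition lecture_hall_nat :: "nat \<Rightarrow> (nat \<Rightarrow> nat) \<Rightarrow> (nat \<Rightarrow> real) set" where
  "lecture_hall_nat m t = {x. (\<forall>i. m \<le> i \<longrightarrow> x i = 0) \<and>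
      (\<forall>i<m. 0 \<le> x i / real (t i) \<and> x i / real (t i) \<le> 1) \<and>
      (\<forall>i j. i \<le> j \<and> j < m \<longrightarrow> x i / real (t i) \<le> x j / real (t j))}"

text \<open>Extreme points of a set of coordinate functions (literal unfolding of
  extreme_point_of: not in the open segment between two points of S).\<close>
definition ext_pts :: "('i \<Rightarrow> real) set \<Rightarrow> ('i \<Rightarrow> real) set" where
  "ext_pts S = {x \<in> S. \<not> (\<exists>a\<in>S. \<exists>b\<in>S. \<exists>u::real. a \<noteq> b \<and> 0 < u \<and> u < 1 \<and>
                                     x = (\<lambda>i. (1 - u) * a i + u * b i))}"

text \<open>l^*(Delta; z) for the lattice simplex with vertex set V:
  sum of z^h over lattice points (x,h) of the open parallelepiped
  { sum_v lambda_v (v,1) : 0 < lambda_v < 1 }.\<close>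
definition lstar :: "('i \<Rightarrow> real) set \<Rightarrow> int poly" where
  "lstar V = (\<Sum>p \<in> {(x, h). (\<forall>i. x i \<in> \<int>) \<and> h \<in> \<int> \<and>
        (\<exists>l. (\<forall>v\<in>V. 0 < l v \<and> l v < 1) \<and>
             x = (\<lambda>i. \<Sum>v\<in>V. l v * v i) \<and> h = (\<Sum>v\<in>V. l v))}.
      monom 1 (nat \<lfloor>snd p\<rfloor>))"

definition ell_star :: "(real^'n) set \<Rightarrow> int poly" where
  "ell_star S = lstar ((\<lambda>v. vec_nth v) ` {v. v extreme_point_of S})"

definition d_poly :: "nat \<Rightarrow> (nat \<Rightarrow> nat) \<Rightarrow> int poly" where
  "d_poly m t = lstar (ext_pts (lecture_hall_nat m t))"

end

(*
  Every vertex of P_n^s has coordinates 0 or s_i, and its support is closed upwards.  Hence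
  the supports of the vertices of a face F are nested, and listing the vertices by decreasing
  support exhibits them as a staircase: v^(k)_i = s_i if k < rho_i and 0 otherwise, where
  every level 1..p is attained by some rho_i.  Such vertices are affinely independent, so F is
  a simplex with p = m.  For a staircase the point sum_k lambda_k (v^(k), 1) is a lattice point
  iff sum_k lambda_k is an integer and s_i (lambda_0 + ... + lambda_(rho_i - 1)) is an integer
  for every i; by Bezout this only depends on the gcds mu_r of the s_i with rho_i = r.  The
  vertices of P_m^mu form the staircase rho_i = i + 1 with exactly these gcds, so the open
  parallelepipeds of F and of P_m^mu have the same lattice points, at the same heights.
*)
theory Submission
  imports Defs
begin

section \<open>Lattice points of the open parallelepiped\<close>

definition affine_indep_family :: "(nat \<Rightarrow> 'i \<Rightarrow> real) \<Rightarrow> nat \<Rightarrow> bool" where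
  "affine_indep_family g m \<longleftrightarrow>
     (\<forall>a. (\<forall>i. (\<Sum>k\<le>m. a k * g k i) = 0) \<and> (\<Sum>k\<le>m. a k) = 0 \<longrightarrow> (\<forall>k\<le>m. a k = 0))"

lemma affine_indep_familyD:
  assumes "affine_indep_family g m" "\<And>i. (\<Sum>k\<le>m. a k * g k i) = 0" "(\<Sum>k\<le>m. a k) = 0" "k \<le> m"
  shows "a k = 0"
  using assms unfolding affine_indep_family_def by blast

lemma affine_indep_family_inj:
  assumes "affine_indep_family g m"
  shows "inj_on g {..m}"
proof (rule inj_onI, rule ccontr)
  fix k k' assume k: "k \<in> {..m}" "k' \<in> {..m}" and eq: "g k = g k'" and ne: "k \<noteq> k'"
  define a :: "nat \<Rightarrow> real" where "a = (\<lambda>j. of_bool (j = k) - of_bool (j = k'))"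
  have "(\<Sum>j\<le>m. a j * g j i) = 0" for i
    using k eq by (simp add: a_def left_diff_distrib sum_subtractf)
  moreover have "(\<Sum>j\<le>m. a j) = 0"
    using k by (simp add: a_def sum_subtractf)
  ultimately have "a k = 0"
    using affine_indep_familyD[OF assms] k by blast
  then show False using ne by (simp add: a_def)
qed

text \<open>Barycentric coordinates of the lattice points of the open parallelepiped spanned by the
  lifted vertices (g k, 1), k \<le> m; they vanish beyond m so that each point has exactly one.\<close>

definition lattice_coeffs :: "(nat \<Rightarrow> 'i \<Rightarrow> real) \<Rightarrow> nat \<Rightarrow> (nat \<Rightarrow> real) set" where
  "lattice_coeffs g m = {l. (\<forall>k>m. l k = 0) \<and> (\<forall>k\<le>m. 0 < l k \<and> l k < 1) \<and>
     (\<forall>i. (\<Sum>k\<le>m. l k * g k i) \<in> \<int>) \<and> (\<Sum>k\<le>m. l k) \<in> \<int>}"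

lemma inj_on_lattice_coeffs:
  assumes indep: "affine_indep_family g m"
  shows "inj_on (\<lambda>l. ((\<lambda>i. \<Sum>k\<le>m. l k * g k i), (\<Sum>k\<le>m. l k))) (lattice_coeffs g m)"
proof (rule inj_onI)
  fix l1 l2 assume l: "l1 \<in> lattice_coeffs g m" "l2 \<in> lattice_coeffs g m"
    and eq: "((\<lambda>i. \<Sum>k\<le>m. l1 k * g k i), (\<Sum>k\<le>m. l1 k)) = ((\<lambda>i. \<Sum>k\<le>m. l2 k * g k i), (\<Sum>k\<le>m. l2 k))"
  have "(\<Sum>k\<le>m. (l1 k - l2 k) * g k i) = 0" for i
    using eq by (simp add: left_diff_distrib sum_subtractf fun_eq_iff)
  moreover have "(\<Sum>k\<le>m. l1 k - l2 k) = 0"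
    using eq by (simp add: sum_subtractf)
  ultimately have diff: "l1 k - l2 k = 0" if "k \<le> m" for k
    using affine_indep_familyD[OF indep, where a="\<lambda>k. l1 k - l2 k"] that by blast
  show "l1 = l2"
  proof
    fix k show "l1 k = l2 k"
      using diff l unfolding lattice_coeffs_def by (cases "k \<le> m") auto
  qed
qed

lemma lstar_image_eq_sum_lattice_coeffs:
  fixes g :: "nat \<Rightarrow> 'i \<Rightarrow> real"
  assumes indep: "affine_indep_family g m"
  shows "lstar (g ` {..m}) = (\<Sum>l\<in>lattice_coeffs g m. monom 1 (nat \<lfloor>\<Sum>k\<le>m. l k\<rfloor>))"
proof -
  let ?V = "g ` {..m}"
  define \<Phi> where "\<Phi> l = ((\<lambda>i. \<Sum>k\<le>m. l k * g k i), (\<Sum>k\<le>m. l k))" for l :: "nat \<Rightarrow> real"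
  have inj: "inj_on g {..m}"
    using indep by (rule affine_indep_family_inj)
  have sum_V: "(\<Sum>v\<in>?V. f v) = (\<Sum>k\<le>m. f (g k))" for f :: "('i \<Rightarrow> real) \<Rightarrow> real"
    using sum.reindex[OF inj] by simp
  have P_eq: "{(x, h). (\<forall>i. x i \<in> \<int>) \<and> h \<in> \<int> \<and>
        (\<exists>l. (\<forall>v\<in>?V. 0 < l v \<and> l v < 1) \<and> x = (\<lambda>i. \<Sum>v\<in>?V. l v * v i) \<and> h = (\<Sum>v\<in>?V. l v))}
      = \<Phi> ` lattice_coeffs g m" (is "?P = _")
  proof (intro set_eqI iffI)
    fix p assume "p \<in> ?P"
    then obtain l where l: "\<forall>k\<le>m. 0 < l (g k) \<and> l (g k) < 1"
      and p: "p = \<Phi> (\<lambda>k. if k \<le> m then l (g k) else 0)" and int: "\<forall>i. fst p i \<in> \<int>" "snd p \<in> \<int>"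
      by (auto simp: \<Phi>_def sum_V)
    have "(\<lambda>k. if k \<le> m then l (g k) else 0) \<in> lattice_coeffs g m"
      using l int unfolding p \<Phi>_def lattice_coeffs_def by auto
    then show "p \<in> \<Phi> ` lattice_coeffs g m"
      unfolding p by blast
  next
    fix p assume "p \<in> \<Phi> ` lattice_coeffs g m"
    then obtain l where l: "l \<in> lattice_coeffs g m" and p: "p = \<Phi> l" by blast
    define l' where "l' v = l (inv_into {..m} g v)" for v
    have "l' (g k) = l k" if "k \<le> m" for k
      using inv_into_f_f[OF inj] that by (simp add: l'_def)
    then show "p \<in> ?P"
      using l unfolding p \<Phi>_def lattice_coeffs_def
      by (auto intro!: exI[of _ l'] simp: sum_V)
  qed
  have inj_\<Phi>: "inj_on \<Phi> (lattice_coeffs g m)"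
    unfolding \<Phi>_def using indep by (rule inj_on_lattice_coeffs)
  show ?thesis
    unfolding lstar_def P_eq sum.reindex[OF inj_\<Phi>] by (simp add: \<Phi>_def)
qed

section \<open>Staircase simplices\<close>

definition staircase :: "('i \<Rightarrow> nat) \<Rightarrow> ('i \<Rightarrow> nat) \<Rightarrow> nat \<Rightarrow> 'i \<Rightarrow> real" where
  "staircase \<rho> c k i = (if k < \<rho> i then real (c i) else 0)"

definition admissible_staircase :: "('i \<Rightarrow> nat) \<Rightarrow> ('i \<Rightarrow> nat) \<Rightarrow> nat \<Rightarrow> bool" where
  "admissible_staircase \<rho> c m \<longleftrightarrow> (\<forall>i. \<rho> i \<le> Suc m) \<and>
     (\<forall>r\<in>{1..m}. finite {i. \<rho> i = r} \<and> (\<exists>i. \<rho> i = r \<and> c i \<noteq> 0))"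

definition level_gcd :: "('i \<Rightarrow> nat) \<Rightarrow> ('i \<Rightarrow> nat) \<Rightarrow> nat \<Rightarrow> nat" where
  "level_gcd \<rho> c r = Gcd (c ` {i. \<rho> i = r})"

lemma staircase_weighted_sum:
  assumes "\<rho> i \<le> Suc m"
  shows "(\<Sum>k\<le>m. l k * staircase \<rho> c k i) = real (c i) * (\<Sum>k<\<rho> i. l k)"
proof -
  have "(\<Sum>k\<le>m. l k * staircase \<rho> c k i) = (\<Sum>k\<le>m. if k \<in> {..<\<rho> i} then real (c i) * l k else 0)"
    by (intro sum.cong) (auto simp: staircase_def)
  also have "\<dots> = (\<Sum>k\<in>{..m} \<inter> {..<\<rho> i}. real (c i) * l k)"
    by (simp add: sum.inter_restrict)
  also have "{..m} \<inter> {..<\<rho> i} = {..<\<rho> i}"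
    using assms by auto
  finally show ?thesis
    by (simp add: sum_distrib_left)
qed

lemma staircase_affine_indep:
  assumes "admissible_staircase \<rho> c m"
  shows "affine_indep_family (staircase \<rho> c) m"
  unfolding affine_indep_family_def
proof (intro allI impI)
  fix a :: "nat \<Rightarrow> real" and k
  assume a: "(\<forall>i. (\<Sum>k\<le>m. a k * staircase \<rho> c k i) = 0) \<and> (\<Sum>k\<le>m. a k) = 0" and "k \<le> m"
  have partial_sum: "(\<Sum>j<r. a j) = 0" if r: "r \<le> Suc m" for r
  proof -
    consider "r = 0" | "r = Suc m" | "r \<in> {1..m}"
      using r by (cases "r = 0"; cases "r = Suc m") auto
    then show ?thesis
    proof cases
      case 2
      then show ?thesis using a by (simp add: lessThan_Suc_atMost)
    next
      case 3
      then obtain i where "\<rho> i = r" "c i \<noteq> 0"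
        using assms unfolding admissible_staircase_def by blast
      then show ?thesis
        using a staircase_weighted_sum[of \<rho> i m a c] assms
        unfolding admissible_staircase_def by auto
    qed simp
  qed
  show "a k = 0"
    using partial_sum[of k] partial_sum[of "Suc k"] \<open>k \<le> m\<close> by simp
qed

lemma mult_Ints_dvd:
  assumes "d dvd b" "real d * x \<in> \<int>"
  shows "real b * x \<in> \<int>"
proof -
  obtain q where "b = d * q"
    using assms(1) by blast
  then have "real b * x = real q * (real d * x)"
    by simp
  then show ?thesis
    using assms(2) by (metis Ints_mult Ints_of_nat)
qed

lemma Gcd_mult_Ints_iff:
  fixes B :: "nat set"
  assumes "finite B"
  shows "(\<forall>b\<in>B. real b * x \<in> \<int>) \<longleftrightarrow> real (Gcd B) * x \<in> \<int>"
proof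
  show "real (Gcd B) * x \<in> \<int> \<Longrightarrow> \<forall>b\<in>B. real b * x \<in> \<int>"
    by (auto intro: mult_Ints_dvd[OF Gcd_dvd])
  show "\<forall>b\<in>B. real b * x \<in> \<int> \<Longrightarrow> real (Gcd B) * x \<in> \<int>"
    using assms
  proof (induction B rule: finite_induct)
    case (insert b B)
    obtain u v :: int where "u * int b + v * int (Gcd B) = int (gcd b (Gcd B))"
      using bezout_int by (metis gcd_int_int_eq)
    then have "real (gcd b (Gcd B)) * x = of_int u * (real b * x) + of_int v * (real (Gcd B) * x)"
      by (metis (mono_tags, opaque_lifting) distrib_right mult.assoc of_int_add of_int_mult of_int_of_nat_eq)
    then show ?case
      using insert by simp
  qed simp
qed

lemma lattice_coeffs_staircase:
  assumes "admissible_staircase \<rho> c m"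
  shows "lattice_coeffs (staircase \<rho> c) m =
    {l. (\<forall>k>m. l k = 0) \<and> (\<forall>k\<le>m. 0 < l k \<and> l k < 1) \<and> (\<Sum>k\<le>m. l k) \<in> \<int> \<and>
        (\<forall>r\<in>{1..m}. real (level_gcd \<rho> c r) * (\<Sum>k<r. l k) \<in> \<int>)}"
proof -
  have \<rho>_le: "\<rho> i \<le> Suc m" for i
    using assms unfolding admissible_staircase_def by blast
  have "(\<forall>i. real (c i) * (\<Sum>k<\<rho> i. l k) \<in> \<int>) \<longleftrightarrow>
      (\<forall>r\<in>{1..m}. real (level_gcd \<rho> c r) * (\<Sum>k<r. l k) \<in> \<int>)"
    if total: "(\<Sum>k\<le>m. l k) \<in> \<int>" for l :: "nat \<Rightarrow> real"
  proof -
    have "(\<forall>i. real (c i) * (\<Sum>k<\<rho> i. l k) \<in> \<int>) \<longleftrightarrow>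
        (\<forall>r\<in>{1..m}. \<forall>b\<in>c ` {i. \<rho> i = r}. real b * (\<Sum>k<r. l k) \<in> \<int>)"
    proof safe
      fix i assume levels: "\<forall>r\<in>{1..m}. \<forall>b\<in>c ` {i. \<rho> i = r}. real b * (\<Sum>k<r. l k) \<in> \<int>"
      consider "\<rho> i = 0" | "\<rho> i = Suc m" | "\<rho> i \<in> {1..m}"
        using \<rho>_le[of i] by (cases "\<rho> i = 0"; cases "\<rho> i = Suc m") auto
      then show "real (c i) * (\<Sum>k<\<rho> i. l k) \<in> \<int>"
      proof cases
        case 2
        then show ?thesis using total by (simp add: lessThan_Suc_atMost Ints_mult)
      next
        case 3
        then show ?thesis using levels by blast
      qed simp
    qed auto
    also have "\<dots> \<longleftrightarrow> (\<forall>r\<in>{1..m}. real (level_gcd \<rho> c r) * (\<Sum>k<r. l k) \<in> \<int>)"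
      using assms unfolding admissible_staircase_def level_gcd_def
      by (intro ball_cong refl Gcd_mult_Ints_iff) auto
    finally show ?thesis .
  qed
  moreover have "(\<Sum>k\<le>m. l k * staircase \<rho> c k i) = real (c i) * (\<Sum>k<\<rho> i. l k)" for l i
    by (simp add: staircase_weighted_sum \<rho>_le)
  ultimately show ?thesis
    unfolding lattice_coeffs_def by auto
qed

lemma lstar_staircase_eq:
  assumes "admissible_staircase \<rho> c m" "admissible_staircase \<rho>' c' m"
    and "\<forall>r\<in>{1..m}. level_gcd \<rho> c r = level_gcd \<rho>' c' r"
  shows "lstar (staircase \<rho> c ` {..m}) = lstar (staircase \<rho>' c' ` {..m})"
proof -
  have "lattice_coeffs (staircase \<rho> c) m = lattice_coeffs (staircase \<rho>' c') m"
    using assms(3) unfolding lattice_coeffs_staircase[OF assms(1)] lattice_coeffs_staircase[OF assms(2)]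
    by auto
  then show ?thesis
    using assms(1,2) by (simp add: lstar_image_eq_sum_lattice_coeffs staircase_affine_indep)
qed

section \<open>Extreme points\<close>

lemma ext_pts_subset: "ext_pts S \<subseteq> S"
  unfolding ext_pts_def by blast

lemma ext_ptsD:
  assumes "x \<in> ext_pts S" "a \<in> S" "b \<in> S" "0 < u" "u < 1" "x = (\<lambda>i. (1 - u) * a i + u * b i)"
  shows "a = b"
  using assms unfolding ext_pts_def by blast

lemma convex_comb_at_endpoint:
  fixes u a b lo hi x :: real
  assumes u: "0 < u" "u < 1" and "lo \<le> a" "a \<le> hi" "lo \<le> b" "b \<le> hi"
    and comb: "(1 - u) * a + u * b = x" and endpoint: "x = lo \<or> x = hi"
  shows "a = x \<and> b = x"
proof -
  have nonneg: "0 \<le> (1 - u) * (a - lo)" "0 \<le> u * (b - lo)" "0 \<le> (1 - u) * (hi - a)" "0 \<le> u * (hi - b)"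
    using assms by simp_all
  have sums: "(1 - u) * (a - lo) + u * (b - lo) = x - lo" "(1 - u) * (hi - a) + u * (hi - b) = hi - x"
    using comb by (simp_all add: algebra_simps)
  from endpoint show ?thesis
  proof
    assume "x = lo"
    then have "(1 - u) * (a - lo) = 0" "u * (b - lo) = 0"
      using nonneg sums by linarith+
    then show ?thesis
      using u \<open>x = lo\<close> by simp
  next
    assume "x = hi"
    then have "(1 - u) * (hi - a) = 0" "u * (hi - b) = 0"
      using nonneg sums by linarith+
    then show ?thesis
      using u \<open>x = hi\<close> by simp
  qed
qed

lemma ext_pts_box_vertex:
  assumes "x \<in> S" and box: "\<forall>y\<in>S. \<forall>i. lo i \<le> y i \<and> y i \<le> hi i"
    and vertex: "\<forall>i. x i = lo i \<or> x i = hi i"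
  shows "x \<in> ext_pts S"
  unfolding ext_pts_def
proof (intro CollectI conjI notI)
  show "x \<in> S" by fact
  assume "\<exists>a\<in>S. \<exists>b\<in>S. \<exists>u. a \<noteq> b \<and> 0 < u \<and> u < 1 \<and> x = (\<lambda>i. (1 - u) * a i + u * b i)"
  then obtain a b u where ab: "a \<in> S" "b \<in> S" "a \<noteq> b" and u: "0 < u" "u < 1"
    and x: "x = (\<lambda>i. (1 - u) * a i + u * b i)"
    by blast
  have "a i = x i \<and> b i = x i" for i
    using box ab vertex[rule_format, of i] x by (intro convex_comb_at_endpoint[OF u]) auto
  then show False
    using \<open>a \<noteq> b\<close> by auto
qed

section \<open>Lecture hall sets of functions\<close>

text \<open>Covers both lecture_hall (with I = UNIV, via vec_nth) and lecture_hall_nat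
  (with I = {..<m}).\<close>

definition lecture_hall_fun :: "'i::linorder set \<Rightarrow> ('i \<Rightarrow> nat) \<Rightarrow> ('i \<Rightarrow> real) set" where
  "lecture_hall_fun I s = {x. (\<forall>i. i \<notin> I \<longrightarrow> x i = 0) \<and>
     (\<forall>i\<in>I. 0 \<le> x i / real (s i) \<and> x i / real (s i) \<le> 1) \<and>
     (\<forall>i\<in>I. \<forall>j\<in>I. i \<le> j \<longrightarrow> x i / real (s i) \<le> x j / real (s j))}"

lemma lecture_hall_nat_eq: "lecture_hall_nat m t = lecture_hall_fun {..<m} t"
  unfolding lecture_hall_nat_def lecture_hall_fun_def by (auto simp: not_less)

lemma lecture_hall_fun_bounds:
  assumes "x \<in> lecture_hall_fun I s" "\<forall>i\<in>I. 0 < s i"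
  shows "0 \<le> x i \<and> x i \<le> (if i \<in> I then real (s i) else 0)"
proof (cases "i \<in> I")
  case True
  then have "0 \<le> x i / real (s i)" "x i / real (s i) \<le> 1" "0 < real (s i)"
    using assms unfolding lecture_hall_fun_def by auto
  then show ?thesis
    using True by (simp add: zero_le_divide_iff)
next
  case False
  then show ?thesis
    using assms unfolding lecture_hall_fun_def by simp
qed

lemma lecture_hall_fun_map_ratios:
  assumes x: "x \<in> lecture_hall_fun I s" and s: "\<forall>i\<in>I. 0 < s i"
    and \<phi>: "mono_on {0..1} \<phi>" "\<phi> ` {0..1} \<subseteq> {0..1}" "\<phi> 0 = 0"
  shows "(\<lambda>i. real (s i) * \<phi> (x i / real (s i))) \<in> lecture_hall_fun I s"
proof -
  have ratio: "real (s i) * \<phi> (x i / real (s i)) / real (s i) = \<phi> (x i / real (s i))" if "i \<in> I" for i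
    using s that by simp
  show ?thesis
    using x \<phi> unfolding lecture_hall_fun_def
    by (auto simp: ratio mono_on_def image_subset_iff)
qed

lemma max_min_split:
  fixes t y :: real
  assumes "0 < t" "t < 1"
  shows "(1 - t) * max ((y - t) / (1 - t)) 0 + t * min (y / t) 1 = y"
proof (cases "y \<le> t")
  case True
  then have "(y - t) / (1 - t) \<le> 0" "y / t \<le> 1"
    using assms by (simp_all add: divide_nonpos_pos)
  then show ?thesis
    using assms by (simp add: max_def min_def)
next
  case False
  then have "0 < (y - t) / (1 - t)" "1 \<le> y / t"
    using assms by simp_all
  then show ?thesis
    using assms by (simp add: max_def min_def)
qed

lemma lecture_hall_fun_split:
  assumes x: "x \<in> lecture_hall_fun I s" and s: "\<forall>i\<in>I. 0 < s i" and t: "0 < t" "t < 1"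
  defines "a \<equiv> \<lambda>j. real (s j) * max ((x j / real (s j) - t) / (1 - t)) 0"
    and "b \<equiv> \<lambda>j. real (s j) * min (x j / real (s j) / t) 1"
  shows "a \<in> lecture_hall_fun I s" "b \<in> lecture_hall_fun I s" "x = (\<lambda>j. (1 - t) * a j + t * b j)"
proof -
  define fa where "fa y = max ((y - t) / (1 - t)) 0" for y
  define fb where "fb y = min (y / t) 1" for y
  have "mono_on {0..1} fa"
    unfolding fa_def using t by (intro mono_onI max.mono divide_right_mono) auto
  moreover have "fa ` {0..1} \<subseteq> {0..1}" "fa 0 = 0"
    unfolding fa_def using t by (auto simp: divide_nonpos_pos)
  ultimately show "a \<in> lecture_hall_fun I s"
    using lecture_hall_fun_map_ratios[OF x s] unfolding a_def fa_def by blast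
  have "mono_on {0..1} fb"
    unfolding fb_def using t by (intro mono_onI min.mono divide_right_mono) auto
  moreover have "fb ` {0..1} \<subseteq> {0..1}" "fb 0 = 0"
    unfolding fb_def using t by auto
  ultimately show "b \<in> lecture_hall_fun I s"
    using lecture_hall_fun_map_ratios[OF x s] unfolding b_def fb_def by blast
  show "x = (\<lambda>j. (1 - t) * a j + t * b j)"
  proof
    fix j
    show "x j = (1 - t) * a j + t * b j"
    proof (cases "s j = 0")
      case True
      then have "j \<notin> I"
        using s by auto
      then show ?thesis
        using x True unfolding lecture_hall_fun_def a_def b_def by simp
    next
      case False
      then have "x j = real (s j) * ((1 - t) * fa (x j / real (s j)) + t * fb (x j / real (s j)))"
        unfolding fa_def fb_def max_min_split[OF t] by simp
      then show ?thesis
        unfolding a_def b_def fa_def fb_def by (simp add: algebra_simps)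
    qed
  qed
qed

lemma lecture_hall_fun_extreme_coord:
  assumes x: "x \<in> ext_pts (lecture_hall_fun I s)" and s: "\<forall>i\<in>I. 0 < s i" and "i \<in> I"
  shows "x i = 0 \<or> x i = real (s i)"
proof (rule ccontr)
  assume not_vertex: "\<not> (x i = 0 \<or> x i = real (s i))"
  have x_mem: "x \<in> lecture_hall_fun I s"
    using x ext_pts_subset by blast
  define t where "t = x i / real (s i)"
  have "0 \<le> t" "t \<le> 1"
    using x_mem \<open>i \<in> I\<close> unfolding t_def lecture_hall_fun_def by blast+
  moreover have "t \<noteq> 0" "t \<noteq> 1"
    using not_vertex s \<open>i \<in> I\<close> unfolding t_def by auto
  ultimately have t: "0 < t" "t < 1"
    by auto
  let ?a = "\<lambda>j. real (s j) * max ((x j / real (s j) - t) / (1 - t)) 0"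
  let ?b = "\<lambda>j. real (s j) * min (x j / real (s j) / t) 1"
  have "?a = ?b"
    using lecture_hall_fun_split[OF x_mem s t] by (rule ext_ptsD[OF x _ _ t])
  then have "?a i = ?b i"
    by (rule fun_cong)
  moreover have "?a i = 0" "?b i = real (s i)"
    using t unfolding t_def[symmetric] by simp_all
  ultimately have "real (s i) = 0"
    by linarith
  then show False
    using s \<open>i \<in> I\<close> by auto
qed

lemma lecture_hall_fun_upward:
  assumes "x \<in> lecture_hall_fun I s" "i \<in> I" "j \<in> I" "i \<le> j" "0 < s i" "0 < s j"
    and "x i = real (s i)"
  shows "x j = real (s j)"
proof -
  have "x i / real (s i) = 1"
    using assms by simp
  moreover have "x i / real (s i) \<le> x j / real (s j)" "x j / real (s j) \<le> 1"
    using assms(1-4) unfolding lecture_hall_fun_def by blast+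
  ultimately have "x j / real (s j) = 1"
    by linarith
  then show ?thesis
    using assms(6) by simp
qed

section \<open>The vertices of P_m^t\<close>

lemma down_closed_eq_lessThan_card:
  fixes D :: "nat set"
  assumes "finite D" and down: "\<And>k k'. k \<in> D \<Longrightarrow> k' \<le> k \<Longrightarrow> k' \<in> D"
  shows "D = {..<card D}"
proof (cases "D = {}")
  case False
  have "D = {..Max D}"
    using down Max_ge[OF \<open>finite D\<close>] Max_in[OF \<open>finite D\<close> False] by auto
  then show ?thesis
    by (metis card_lessThan lessThan_Suc_atMost)
qed simp

definition lecture_hall_nat_rank :: "nat \<Rightarrow> nat \<Rightarrow> nat" where
  "lecture_hall_nat_rank m i = (if i < m then Suc i else 0)"

lemma lecture_hall_nat_rank_level:
  assumes "r \<in> {1..m}"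
  shows "{i. lecture_hall_nat_rank m i = r} = {r - 1}"
  using assms unfolding lecture_hall_nat_rank_def by auto

lemma staircase_in_ext_pts_lecture_hall_nat:
  assumes \<mu>: "\<forall>i<m. 0 < \<mu> i"
  shows "staircase (lecture_hall_nat_rank m) \<mu> k \<in> ext_pts (lecture_hall_nat m \<mu>)"
proof (rule ext_pts_box_vertex)
  show "staircase (lecture_hall_nat_rank m) \<mu> k \<in> lecture_hall_nat m \<mu>"
    using \<mu> unfolding lecture_hall_nat_def staircase_def lecture_hall_nat_rank_def by auto
  show "\<forall>y\<in>lecture_hall_nat m \<mu>. \<forall>i. 0 \<le> y i \<and> y i \<le> (if i < m then real (\<mu> i) else 0)"
    using \<mu> lecture_hall_fun_bounds[of _ "{..<m}" \<mu>] by (simp add: lecture_hall_nat_eq)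
  show "\<forall>i. staircase (lecture_hall_nat_rank m) \<mu> k i = 0 \<or>
      staircase (lecture_hall_nat_rank m) \<mu> k i = (if i < m then real (\<mu> i) else 0)"
    unfolding staircase_def lecture_hall_nat_rank_def by auto
qed

lemma lecture_hall_nat_zeros:
  assumes "x \<in> lecture_hall_nat m \<mu>" "\<forall>i<m. 0 < \<mu> i"
  shows "{i. i < m \<and> x i = 0} = {..<card {i. i < m \<and> x i = 0}}"
proof (rule down_closed_eq_lessThan_card)
  fix k k' assume "k \<in> {i. i < m \<and> x i = 0}" "k' \<le> k"
  then have "k < m" "x k = 0" "k' < m"
    by auto
  then have "x k' / real (\<mu> k') \<le> x k / real (\<mu> k)" "0 \<le> x k' / real (\<mu> k')"
    using assms(1) \<open>k' \<le> k\<close> unfolding lecture_hall_nat_def by blast+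
  then have "x k' / real (\<mu> k') = 0"
    using \<open>x k = 0\<close> by simp
  then show "k' \<in> {i. i < m \<and> x i = 0}"
    using assms(2) \<open>k' < m\<close> by auto
qed simp

lemma ext_pts_lecture_hall_nat:
  assumes \<mu>: "\<forall>i<m. 0 < \<mu> i"
  shows "ext_pts (lecture_hall_nat m \<mu>) = staircase (lecture_hall_nat_rank m) \<mu> ` {..m}"
proof
  show "staircase (lecture_hall_nat_rank m) \<mu> ` {..m} \<subseteq> ext_pts (lecture_hall_nat m \<mu>)"
    using staircase_in_ext_pts_lecture_hall_nat[OF \<mu>] by blast
  show "ext_pts (lecture_hall_nat m \<mu>) \<subseteq> staircase (lecture_hall_nat_rank m) \<mu> ` {..m}"
  proof
    fix x assume x: "x \<in> ext_pts (lecture_hall_nat m \<mu>)"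
    then have x_mem: "x \<in> lecture_hall_nat m \<mu>"
      using ext_pts_subset by blast
    have vertex: "x i = 0 \<or> x i = real (\<mu> i)" if "i < m" for i
      using lecture_hall_fun_extreme_coord[of x "{..<m}" \<mu> i] x \<mu> that
      by (simp add: lecture_hall_nat_eq)
    define D where "D = {i. i < m \<and> x i = 0}"
    have D: "D = {..<card D}"
      unfolding D_def using x_mem \<mu> by (rule lecture_hall_nat_zeros)
    have "card D \<le> m"
      using card_mono[of "{..<m}" D] unfolding D_def by auto
    moreover have "x i = staircase (lecture_hall_nat_rank m) \<mu> (card D) i" for i
    proof (cases "i < m")
      case True
      then have "x i = 0 \<longleftrightarrow> i < card D"
        using D unfolding D_def by blast
      then show ?thesis
        using vertex[OF True] True \<mu> unfolding staircase_def lecture_hall_nat_rank_def by auto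
    next
      case False
      then show ?thesis
        using x_mem unfolding lecture_hall_nat_def staircase_def lecture_hall_nat_rank_def by simp
    qed
    ultimately show "x \<in> staircase (lecture_hall_nat_rank m) \<mu> ` {..m}"
      by (auto intro!: image_eqI[of x _ "card D"])
  qed
qed

lemma level_gcd_lecture_hall_nat_rank:
  assumes "r \<in> {1..m}"
  shows "level_gcd (lecture_hall_nat_rank m) \<mu> r = \<mu> (r - 1)"
  unfolding level_gcd_def lecture_hall_nat_rank_level[OF assms] by simp

lemma admissible_lecture_hall_nat_rank:
  assumes "\<forall>i<m. 0 < \<mu> i"
  shows "admissible_staircase (lecture_hall_nat_rank m) \<mu> m"
  unfolding admissible_staircase_def
proof (intro conjI ballI allI)
  show "lecture_hall_nat_rank m i \<le> Suc m" for i
    by (simp add: lecture_hall_nat_rank_def)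
  fix r assume r: "r \<in> {1..m}"
  then show "finite {i. lecture_hall_nat_rank m i = r}"
    by (simp add: lecture_hall_nat_rank_level)
  have "lecture_hall_nat_rank m (r - 1) = r"
    using lecture_hall_nat_rank_level[OF r] by blast
  moreover have "\<mu> (r - 1) \<noteq> 0"
    using assms r by auto
  ultimately show "\<exists>i. lecture_hall_nat_rank m i = r \<and> \<mu> i \<noteq> 0"
    by blast
qed

lemma level_gcd_pos:
  assumes "admissible_staircase \<rho> c m" "r \<in> {1..m}"
  shows "0 < level_gcd \<rho> c r"
proof -
  obtain i where i: "\<rho> i = r" "c i \<noteq> 0"
    using assms unfolding admissible_staircase_def by blast
  then have "level_gcd \<rho> c r dvd c i"
    unfolding level_gcd_def by (simp add: Gcd_dvd)
  then show ?thesis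
    using i(2) by (auto intro: gr0I)
qed

text \<open>The sequence argument of d_poly is indexed from 0, so its entry r is the gcd of
  level r + 1.\<close>

lemma lstar_staircase_eq_d_poly:
  assumes "admissible_staircase \<rho> c m"
  shows "lstar (staircase \<rho> c ` {..m}) = d_poly m (\<lambda>r. level_gcd \<rho> c (Suc r))"
proof -
  let ?\<mu> = "\<lambda>r. level_gcd \<rho> c (Suc r)"
  have \<mu>_pos: "\<forall>i<m. 0 < ?\<mu> i"
    using level_gcd_pos[OF assms] by simp
  have "lstar (staircase \<rho> c ` {..m}) = lstar (staircase (lecture_hall_nat_rank m) ?\<mu> ` {..m})"
    using assms admissible_lecture_hall_nat_rank[OF \<mu>_pos]
    by (intro lstar_staircase_eq) (auto simp: level_gcd_lecture_hall_nat_rank)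
  also have "\<dots> = d_poly m ?\<mu>"
    unfolding d_poly_def ext_pts_lecture_hall_nat[OF \<mu>_pos] ..
  finally show ?thesis .
qed

section \<open>The vertices of a face of P_n^s\<close>

lemma up_closed_sets_chain:
  fixes A B :: "'a::linorder set"
  assumes "\<And>i j. i \<in> A \<Longrightarrow> i \<le> j \<Longrightarrow> j \<in> A" "\<And>i j. i \<in> B \<Longrightarrow> i \<le> j \<Longrightarrow> j \<in> B"
  shows "A \<subseteq> B \<or> B \<subseteq> A"
proof (rule ccontr)
  assume "\<not> (A \<subseteq> B \<or> B \<subseteq> A)"
  then obtain a b where "a \<in> A" "a \<notin> B" "b \<in> B" "b \<notin> A"
    by blast
  then show False
    using assms le_cases[of a b] by blast
qed

lemma finite_enumeration_by_key:
  fixes \<kappa> :: "'a \<Rightarrow> nat"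
  assumes "finite V" "inj_on \<kappa> V"
  obtains g where "bij_betw g {..<card V} V" "\<And>k k'. k < k' \<Longrightarrow> k' < card V \<Longrightarrow> \<kappa> (g k) < \<kappa> (g k')"
proof -
  have card: "card (\<kappa> ` V) = card V"
    using assms(2) by (rule card_image)
  obtain h where h: "bij_betw h {..<card V} (\<kappa> ` V)" "strict_mono_on {..<card V} h"
    using ex_bij_betw_strict_mono_card[of "\<kappa> ` V"] assms(1) card by auto
  have "bij_betw (inv_into V \<kappa> \<circ> h) {..<card V} V"
    using h(1) bij_betw_inv_into[OF inj_on_imp_bij_betw[OF assms(2)]] by (rule bij_betw_trans)
  moreover have "\<kappa> ((inv_into V \<kappa> \<circ> h) k) = h k" if "k < card V" for k
    using bij_betwE[OF h(1)] that by (simp add: f_inv_into_f)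
  ultimately show thesis
    using that[of "inv_into V \<kappa> \<circ> h"] h(2) by (simp add: strict_mono_on_def)
qed

lemma staircase_of_nested_supports:
  fixes g :: "nat \<Rightarrow> 'i \<Rightarrow> real"
  assumes g: "\<And>k i. k \<le> p \<Longrightarrow> g k i = (if i \<in> S k then real (c i) else 0)"
    and nested: "\<And>k k'. k < k' \<Longrightarrow> k' \<le> p \<Longrightarrow> S k' \<subset> S k"
  obtains \<rho> where "\<forall>k\<le>p. g k = staircase \<rho> c k" "\<forall>i. \<rho> i \<le> Suc p" "\<forall>r\<in>{1..p}. \<exists>i. \<rho> i = r"
proof -
  define \<rho> where "\<rho> i = card {k. k \<le> p \<and> i \<in> S k}" for i
  have levels: "{k. k \<le> p \<and> i \<in> S k} = {..<\<rho> i}" for i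
    unfolding \<rho>_def
  proof (rule down_closed_eq_lessThan_card)
    fix k k' assume "k \<in> {k. k \<le> p \<and> i \<in> S k}" "k' \<le> k"
    then show "k' \<in> {k. k \<le> p \<and> i \<in> S k}"
      using nested[of k' k] by (cases "k' = k") auto
  qed simp
  then have in_S: "i \<in> S k \<longleftrightarrow> k < \<rho> i" if "k \<le> p" for i k
    using that by blast
  have "\<forall>k\<le>p. g k = staircase \<rho> c k"
    by (simp add: g in_S staircase_def fun_eq_iff)
  moreover have "\<forall>i. \<rho> i \<le> Suc p"
  proof
    fix i
    have "{..<\<rho> i} \<subseteq> {..p}"
      using levels[of i] by blast
    then show "\<rho> i \<le> Suc p"
      using card_mono[of "{..p}" "{..<\<rho> i}"] by simp
  qed
  moreover have "\<forall>r\<in>{1..p}. \<exists>i. \<rho> i = r"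
  proof
    fix r assume r: "r \<in> {1..p}"
    then obtain i where "i \<in> S (r - 1)" "i \<notin> S r"
      using nested[of "r - 1" r] by auto
    then have "r - 1 < \<rho> i" "\<not> r < \<rho> i"
      using in_S[of "r - 1" i] in_S[of r i] r by auto
    then show "\<exists>i. \<rho> i = r"
      using r by (intro exI[of _ i]) simp
  qed
  ultimately show thesis
    by (rule that)
qed

lemma chain_card_eq:
  assumes "finite A" "finite B" "A \<subseteq> B \<or> B \<subseteq> A" "card A = card B"
  shows "A = B"
proof (cases "A \<subseteq> B")
  case True
  then show ?thesis
    using assms(2,4) by (intro card_subset_eq)
next
  case False
  then have "B \<subseteq> A"
    using assms(3) by blast
  then show ?thesis
    using assms(1,4) card_subset_eq[of A B] by simp
qed

lemma chain_enumeration: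
  fixes S :: "'a \<Rightarrow> 'i::finite set"
  assumes "finite V" "V \<noteq> {}" "inj_on S V"
    and chain: "\<And>v w. v \<in> V \<Longrightarrow> w \<in> V \<Longrightarrow> S v \<subseteq> S w \<or> S w \<subseteq> S v"
  obtains g and p :: nat where "bij_betw g {..p} V" "\<And>k k'. k < k' \<Longrightarrow> k' \<le> p \<Longrightarrow> S (g k') \<subset> S (g k)"
proof -
  define zeros where "zeros v = card (- S v)" for v
  have "inj_on zeros V"
  proof (rule inj_onI)
    fix v w assume v: "v \<in> V" and w: "w \<in> V" and "zeros v = zeros w"
    moreover have "- S v \<subseteq> - S w \<or> - S w \<subseteq> - S v"
      using chain[OF v w] by blast
    ultimately have "- S v = - S w"
      unfolding zeros_def by (intro chain_card_eq) simp_all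
    then show "v = w"
      using inj_onD[OF assms(3)] v w by simp
  qed
  then obtain g where g: "bij_betw g {..<card V} V"
    and incr: "\<And>k k'. k < k' \<Longrightarrow> k' < card V \<Longrightarrow> zeros (g k) < zeros (g k')"
    using finite_enumeration_by_key[OF assms(1)] by blast
  define p where "p = card V - 1"
  have card_V: "card V = Suc p"
    using assms(1,2) unfolding p_def by (simp add: card_gt_0_iff)
  then have g_bij: "bij_betw g {..p} V"
    using g by (simp add: lessThan_Suc_atMost)
  moreover have nested: "S (g k') \<subset> S (g k)" if "k < k'" "k' \<le> p" for k k'
  proof -
    have "\<not> S (g k) \<subseteq> S (g k')"
    proof
      assume "S (g k) \<subseteq> S (g k')"
      then have "card (- S (g k')) \<le> card (- S (g k))"
        by (intro card_mono) auto
      then show False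
        using incr[of k k'] that card_V unfolding zeros_def by simp
    qed
    moreover have "g k \<in> V" "g k' \<in> V"
      using bij_betwE[OF g_bij] that by auto
    ultimately show ?thesis
      using chain by blast
  qed
  ultimately show thesis
    using that by blast
qed

lemma lecture_hall_fun_vertex_up:
  assumes v: "v \<in> ext_pts (lecture_hall_fun UNIV s)" and s: "\<forall>i. 0 < s i"
    and "v i \<noteq> 0" "i \<le> j"
  shows "v j \<noteq> 0"
proof -
  have "v i = real (s i)"
    using lecture_hall_fun_extreme_coord[OF v, of i] s \<open>v i \<noteq> 0\<close> by auto
  then have "v j = real (s j)"
    using v s \<open>i \<le> j\<close> ext_pts_subset by (auto intro: lecture_hall_fun_upward[of v UNIV s i])
  then show ?thesis
    using s[rule_format, of j] by simp
qed

lemma finite_ext_pts_lecture_hall_fun: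
  fixes s :: "'i::{finite,linorder} \<Rightarrow> nat"
  assumes s: "\<forall>i. 0 < s i"
  shows "finite (ext_pts (lecture_hall_fun UNIV s))"
proof (rule finite_subset)
  show "ext_pts (lecture_hall_fun UNIV s) \<subseteq> range (\<lambda>A i. if i \<in> A then real (s i) else 0)"
  proof
    fix v assume "v \<in> ext_pts (lecture_hall_fun UNIV s)"
    then have "v = (\<lambda>i. if i \<in> {i. v i \<noteq> 0} then real (s i) else 0)"
      using lecture_hall_fun_extreme_coord[of v UNIV s] s by fastforce
    then show "v \<in> range (\<lambda>A i. if i \<in> A then real (s i) else 0)"
      by blast
  qed
qed simp

lemma staircase_of_lecture_hall_vertices:
  fixes V :: "('i::{finite,linorder} \<Rightarrow> real) set"
  assumes V: "V \<subseteq> ext_pts (lecture_hall_fun UNIV s)" "V \<noteq> {}" and s: "\<forall>i. 0 < s i"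
  obtains p \<rho> where "V = staircase \<rho> s ` {..p}" "admissible_staircase \<rho> s p"
proof -
  define supp where "supp v = {i. v i \<noteq> 0}" for v :: "'i \<Rightarrow> real"
  have vertex: "v i = (if i \<in> supp v then real (s i) else 0)" if "v \<in> V" for v i
    using lecture_hall_fun_extreme_coord[of v UNIV s i] V s that unfolding supp_def by auto
  have fin: "finite V"
    using V(1) finite_ext_pts_lecture_hall_fun[OF s] by (rule finite_subset)
  have inj: "inj_on supp V"
  proof (rule inj_onI)
    fix v w assume "v \<in> V" "w \<in> V" "supp v = supp w"
    show "v = w"
    proof
      fix i
      show "v i = w i"
        using vertex[OF \<open>v \<in> V\<close>, of i] vertex[OF \<open>w \<in> V\<close>, of i] \<open>supp v = supp w\<close> by simp
    qed
  qed
  have chain: "supp v \<subseteq> supp w \<or> supp w \<subseteq> supp v" if "v \<in> V" "w \<in> V" for v w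
    using that V(1) lecture_hall_fun_vertex_up[OF _ s] unfolding supp_def
    by (intro up_closed_sets_chain) blast+
  obtain g and p :: nat where g: "bij_betw g {..p} V"
    and nested: "\<And>k k'. k < k' \<Longrightarrow> k' \<le> p \<Longrightarrow> supp (g k') \<subset> supp (g k)"
    using chain_enumeration[OF fin V(2) inj chain] by blast
  have "g k i = (if i \<in> supp (g k) then real (s i) else 0)" if "k \<le> p" for k i
    using bij_betwE[OF g] that by (intro vertex) simp
  then obtain \<rho> where \<rho>: "\<forall>k\<le>p. g k = staircase \<rho> s k" "\<forall>i. \<rho> i \<le> Suc p"
    "\<forall>r\<in>{1..p}. \<exists>i. \<rho> i = r"
    using nested by (rule staircase_of_nested_supports)
  have "V = staircase \<rho> s ` {..p}"
    using \<rho>(1) bij_betw_imp_surj_on[OF g] by auto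
  moreover have "admissible_staircase \<rho> s p"
    using \<rho>(2,3) s unfolding admissible_staircase_def by fastforce
  ultimately show thesis
    by (rule that)
qed

lemma lecture_hall_vec_nth: "vec_nth ` lecture_hall s = lecture_hall_fun UNIV s"
proof
  show "vec_nth ` lecture_hall s \<subseteq> lecture_hall_fun UNIV s"
    unfolding lecture_hall_def lecture_hall_fun_def by auto
  show "lecture_hall_fun UNIV s \<subseteq> vec_nth ` lecture_hall s"
  proof
    fix x assume "x \<in> lecture_hall_fun UNIV s"
    then have "vec_lambda x \<in> lecture_hall s"
      unfolding lecture_hall_def lecture_hall_fun_def by simp
    then show "x \<in> vec_nth ` lecture_hall s"
      by (metis image_eqI vec_lambda_inverse UNIV_I)
  qed
qed

lemma convex_lecture_hall: "convex (lecture_hall s)"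
proof (rule convexI)
  fix x y and u v :: real
  assume x: "x \<in> lecture_hall s" and y: "y \<in> lecture_hall s" and uv: "0 \<le> u" "0 \<le> v" "u + v = 1"
  define X where "X i = x $ i / real (s i)" for i
  define Y where "Y i = y $ i / real (s i)" for i
  have XY: "0 \<le> X i" "X i \<le> 1" "0 \<le> Y i" "Y i \<le> 1" for i
    using x y unfolding lecture_hall_def X_def Y_def by blast+
  have XY_mono: "X i \<le> X j" "Y i \<le> Y j" if "i \<le> j" for i j
    using x y that unfolding lecture_hall_def X_def Y_def by blast+
  have "(u *\<^sub>R x + v *\<^sub>R y) $ i / real (s i) = u * X i + v * Y i" for i
    unfolding X_def Y_def by (simp add: add_divide_distrib)
  moreover have "0 \<le> u * X i + v * Y i" "u * X i + v * Y i \<le> 1" for i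
    using XY uv by (simp_all add: convex_bound_le)
  moreover have "u * X i + v * Y i \<le> u * X j + v * Y j" if "i \<le> j" for i j
    using XY_mono[OF that] uv by (intro add_mono mult_left_mono)
  ultimately show "u *\<^sub>R x + v *\<^sub>R y \<in> lecture_hall s"
    unfolding lecture_hall_def by simp
qed

lemma compact_lecture_hall:
  assumes "\<forall>i. 0 < s i"
  shows "compact (lecture_hall s)"
  unfolding compact_eq_bounded_closed
proof
  show "closed (lecture_hall s)"
    unfolding lecture_hall_def using assms
    by (intro closed_Collect_conj closed_Collect_all closed_Collect_imp closed_Collect_le continuous_intros) auto
  have "lecture_hall s \<subseteq> cbox 0 (\<chi> i. real (s i))"
  proof
    fix x assume "x \<in> lecture_hall s"
    then have "vec_nth x \<in> lecture_hall_fun UNIV s"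
      using lecture_hall_vec_nth by blast
    then show "x \<in> cbox 0 (\<chi> i. real (s i))"
      using lecture_hall_fun_bounds[of "vec_nth x" UNIV s] assms by (simp add: mem_box_cart)
  qed
  then show "bounded (lecture_hall s)"
    using bounded_cbox bounded_subset by blast
qed

lemma vec_nth_extreme_point:
  assumes "v extreme_point_of S"
  shows "vec_nth v \<in> ext_pts (vec_nth ` S)"
  unfolding ext_pts_def
proof (intro CollectI conjI notI)
  show "vec_nth v \<in> vec_nth ` S"
    using assms unfolding extreme_point_of_def by blast
  assume "\<exists>a\<in>vec_nth ` S. \<exists>b\<in>vec_nth ` S. \<exists>u. a \<noteq> b \<and> 0 < u \<and> u < 1 \<and>
      vec_nth v = (\<lambda>i. (1 - u) * a i + u * b i)"
  then obtain a b u where "a \<in> S" "b \<in> S" "a \<noteq> b" "0 < u" "u < 1"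
    and "vec_nth v = (\<lambda>i. (1 - u) * a $ i + u * b $ i)"
    by blast
  then have "v \<in> open_segment a b"
    unfolding in_segment by (auto simp: vec_eq_iff fun_eq_iff)
  then show False
    using assms \<open>a \<in> S\<close> \<open>b \<in> S\<close> unfolding extreme_point_of_def by blast
qed

lemma aff_dim_affine_indep_family:
  fixes E :: "(real^'n) set"
  assumes indep: "affine_indep_family g p" and E: "vec_nth ` E = g ` {..p}"
  shows "aff_dim E = int p"
proof -
  define e where "e k = vec_lambda (g k)" for k
  have "E = vec_lambda ` vec_nth ` E"
    by (simp add: image_image vec_nth_inverse)
  then have E_eq: "E = e ` {..p}"
    unfolding E by (simp add: image_image e_def)
  have inj_e: "inj_on e {..p}"
    using affine_indep_family_inj[OF indep] unfolding e_def inj_on_def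
    by (metis vec_lambda_inverse UNIV_I)
  have sum_E: "(\<Sum>v\<in>E. f v) = (\<Sum>k\<le>p. f (e k))" for f :: "real^'n \<Rightarrow> 'b::comm_monoid_add"
    unfolding E_eq using sum.reindex[OF inj_e] by simp
  have "\<not> affine_dependent E"
  proof
    assume "affine_dependent E"
    then obtain U where U: "sum U E = 0" "(\<Sum>v\<in>E. U v *\<^sub>R v) = 0" and "\<exists>v\<in>E. U v \<noteq> 0"
      using affine_dependent_explicit_finite[of E] E_eq by blast
    moreover have "U (e k) = 0" if "k \<le> p" for k
    proof (rule affine_indep_familyD[OF indep _ _ that])
      show "(\<Sum>k\<le>p. U (e k) * g k i) = 0" for i
        using arg_cong[OF U(2), of "\<lambda>x. x $ i"] by (simp add: sum_E e_def)
      show "(\<Sum>k\<le>p. U (e k)) = 0"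
        using U(1) by (simp add: sum_E)
    qed
    ultimately show False
      unfolding E_eq by blast
  qed
  then have "int (card E) = aff_dim E + 1"
    by (rule aff_dim_affine_independent)
  moreover have "card E = Suc p"
    unfolding E_eq using card_image[OF inj_e] by simp
  ultimately show ?thesis
    by simp
qed

theorem theorem5p5:
  fixes s :: "'n::{finite,linorder} \<Rightarrow> nat" and F :: "(real^('n::{finite,linorder})) set" and m :: nat
  assumes "\<forall>i. 0 < s i"
    and "F face_of lecture_hall s"
    and "F \<noteq> {}"
    and "aff_dim F = int m"
  shows "\<exists>\<mu>::nat \<Rightarrow> nat. (\<forall>i<m. 0 < \<mu> i) \<and> ell_star F = d_poly m \<mu>"
proof -
  note s = assms(1) and face = assms(2)
  define E where "E = {v. v extreme_point_of F}"
  have F_hull: "F = convex hull E"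
    unfolding E_def using face_of_imp_compact[OF convex_lecture_hall compact_lecture_hall[OF s] face]
    by (intro Krein_Milman_Minkowski face_of_imp_convex[OF face])
  have "vec_nth ` E \<subseteq> ext_pts (lecture_hall_fun UNIV s)"
    unfolding E_def lecture_hall_vec_nth[symmetric]
    using extreme_point_of_face[OF face] vec_nth_extreme_point by blast
  moreover have "vec_nth ` E \<noteq> {}"
    using F_hull assms(3) by auto
  ultimately obtain p \<rho> where V: "vec_nth ` E = staircase \<rho> s ` {..p}" and adm: "admissible_staircase \<rho> s p"
    using s by (rule staircase_of_lecture_hall_vertices)
  have "int p = aff_dim F"
    unfolding F_hull aff_dim_convex_hull
    by (rule aff_dim_affine_indep_family[OF staircase_affine_indep[OF adm] V, symmetric])
  then have "p = m"
    using assms(4) by simp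
  define \<mu> where "\<mu> r = level_gcd \<rho> s (Suc r)" for r
  have "ell_star F = d_poly m \<mu>"
    unfolding ell_star_def E_def[symmetric] V \<mu>_def using lstar_staircase_eq_d_poly[OF adm] \<open>p = m\<close> by simp
  moreover have "\<forall>i<m. 0 < \<mu> i"
    using level_gcd_pos[OF adm] \<open>p = m\<close> by (simp add: \<mu>_def)
  ultimately show ?thesis
    by blast
qed

end
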